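(* Let $\Sigma$ be a finite alphabet and let $L\subseteq\Sigma^*$ be the language of unique Eulerian trails. Let $L''\subseteq\Sigma^*$ be the set of words $r$ of one of the two forms (a) $r=axbzayb$ with $a,b\in\Sigma$, $a\neq b$, $x,y,z\in\Sigma^*$, or (b) $r=axaya$ with $a\in\Sigma$, $x,y\in\Sigma^*$ (and $z=\epsilon$ in the conditions below), satisfying: (1) $x\neq\epsilon$ or $y\neq\epsilon$; (2) $x,y,z\in L$; (3) none of $x,y,z$ contains the letter $a$ or the letter $b$, and no two of $x,y,z$ contain a common letter. Then $L''$ equals the set of minimal forbidden words of $L$.
   Context: For a word $t=t_1\cdots t_n$ over $\Sigma$ (viewed as a vertex set), $G(t)$ is the directed multigraph on $\Sigma$ with one edge $t_i\to t_{i+1}$ for each $1\le i<n$; a word $s=s_1\cdots s_k$ is an Eulerian trail of $G(t)$ if the multiset of pairs $\{(s_i,s_{i+1}):1\le i<k\}$ equals the multiset $\{(t_i,t_{i+1}):1\le i<n\}$. The language $L$ consists of the empty word $\epsilon$ together with all nonempty words $t$ such that no word $s\neq t$ with $s_1=t_1$ is an Eulerian trail of $G(t)$. A word $r$ is a minimal forbidden word of $L$ if $r\notin L$ while every proper factor (contiguous subword) of $r$ belongs to $L$. *)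

theory Defs
  imports Main "HOL-Library.Multiset" "HOL-Library.Sublist"
begin

text \<open>Edge multiset of the directed multigraph G(t): one edge (t_i, t_(i+1)) per i.\<close>
definition edges :: "'a list \<Rightarrow> ('a \<times> 'a) multiset" where
  "edges t = mset (zip t (tl t))"

definition eulerian_trail :: "'a list \<Rightarrow> 'a list \<Rightarrow> bool" where
  "eulerian_trail s t \<longleftrightarrow> edges s = edges t"

definition UET :: "'a list set" where
  "UET = {t. t = [] \<or>
     (\<forall>s. s \<noteq> [] \<and> hd s = hd t \<and> eulerian_trail s t \<longrightarrow> s = t)}"

definition min_forbidden :: "'a list set \<Rightarrow> 'a list set" where
  "min_forbidden L = {r. r \<notin> L \<and> (\<forall>u. sublist u r \<and> u \<noteq> r \<longrightarrow> u \<in> L)}"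

definition Lpp :: "'a list set" where
  "Lpp = {r.
     (\<exists>a b x y z. r = [a] @ x @ [b] @ z @ [a] @ y @ [b] \<and> a \<noteq> b \<and>
        (x \<noteq> [] \<or> y \<noteq> []) \<and> x \<in> UET \<and> y \<in> UET \<and> z \<in> UET \<and>
        a \<notin> set x \<and> a \<notin> set y \<and> a \<notin> set z \<and>
        b \<notin> set x \<and> b \<notin> set y \<and> b \<notin> set z \<and>
        set x \<inter> set y = {} \<and> set x \<inter> set z = {} \<and> set y \<inter> set z = {})
   \<or> (\<exists>a x y. r = [a] @ x @ [a] @ y @ [a] \<and>
        (x \<noteq> [] \<or> y \<noteq> []) \<and> x \<in> UET \<and> y \<in> UET \<and>
        a \<notin> set x \<and> a \<notin> set y \<and> set x \<inter> set y = {})}"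

end

theory Submission
  imports Defs
begin

text \<open>A word r is not a unique Eulerian trail as soon as it contains two parallel segments
  that can be exchanged: a x b z a y b has the same edges as a y b z a x b, and a x a y a the
  same as a y a x a. The side conditions of L'' make this exchange change the word, while
  every proper factor remains a unique trail; the latter uses that unique trails are closed
  under factors, reversal and concatenation over disjoint alphabets.

  Conversely, a competing trail of a minimal forbidden word r = a r' must leave a along an
  edge (a, d) different from r's first edge, since r' is unique. Cutting r as a C a D at the
  first occurrence of the edge (a, d) and applying the exchange argument to proper factors of r
  forces r = a C a D' a if a occurs again in D, and r = a X b Z a Y b otherwise, with all
  the side conditions of L''.\<close>

lemma hd_append_Cons: "hd (xs @ y # ys) = hd (xs @ [y])"
  by (simp add: hd_append)

lemma append_Cons_eq_append_Cons_first:
  assumes "x \<notin> set xs" "x \<notin> set xs'" "xs @ x # ys = xs' @ x # ys'"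
  shows "xs = xs'"
  using assms
proof (induction xs arbitrary: xs')
  case Nil
  then show ?case by (cases xs') auto
next
  case (Cons y xs)
  then show ?case by (cases xs') auto
qed

lemma sublist_proper_cases:
  assumes "sublist u r" "u \<noteq> r"
  shows "sublist u (tl r) \<or> sublist u (butlast r)"
proof -
  obtain p q where r: "r = p @ u @ q"
    using assms(1) by (auto simp: sublist_def)
  show ?thesis
  proof (cases p)
    case (Cons x p')
    then have "tl r = p' @ u @ q"
      using r by simp
    then show ?thesis
      by auto
  next
    case Nil
    then have "butlast r = u @ butlast q"
      using r assms(2) by (cases q rule: rev_cases) (auto simp: butlast_append)
    then show ?thesis
      by auto
  qed
qed

section \<open>Edge multisets\<close>

lemma edges_Nil [simp]: "edges [] = {#}"
  by (simp add: edges_def)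

lemma edges_singleton [simp]: "edges [x] = {#}"
  by (simp add: edges_def)

lemma edges_Cons_Cons [simp]: "edges (x # y # ys) = add_mset (x, y) (edges (y # ys))"
  by (simp add: edges_def)

lemma edges_Cons: "xs \<noteq> [] \<Longrightarrow> edges (x # xs) = add_mset (x, hd xs) (edges xs)"
  by (cases xs) auto

lemma edges_append_Cons: "edges (xs @ y # ys) = edges (xs @ [y]) + edges (y # ys)"
  by (induction xs rule: induct_list012) auto

lemma edges_snoc: "xs \<noteq> [] \<Longrightarrow> edges (xs @ [y]) = add_mset (last xs, y) (edges xs)"
  by (induction xs rule: induct_list012) auto

lemma edges_append:
  "xs \<noteq> [] \<Longrightarrow> ys \<noteq> [] \<Longrightarrow> edges (xs @ ys) = add_mset (last xs, hd ys) (edges xs + edges ys)"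
  using edges_append_Cons[of xs "hd ys" "tl ys"] by (simp add: edges_snoc edges_Cons)

lemma edges_append_middle:
  "w \<noteq> [] \<Longrightarrow> edges (u @ w @ v) = edges (u @ [hd w]) + edges w + edges (last w # v)"
  by (cases "u = []"; cases "v = []") (simp_all add: edges_append edges_snoc edges_Cons ac_simps)

lemma edges_rev: "edges (rev xs) = image_mset prod.swap (edges xs)"
proof (induction xs)
  case (Cons x xs)
  show ?case
  proof (cases xs)
    case (Cons y ys)
    have "edges (rev (x # xs)) = edges (rev xs @ [x])"
      by simp
    also have "\<dots> = add_mset (last (rev xs), x) (edges (rev xs))"
      using Cons by (simp add: edges_snoc del: rev.simps)
    also have "\<dots> = image_mset prod.swap (edges (x # xs))"
      using Cons \<open>edges (rev xs) = _\<close> by (simp add: last_rev)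
    finally show ?thesis .
  qed simp
qed simp

lemma image_fst_edges: "image_mset fst (edges xs) = mset (butlast xs)"
  by (induction xs rule: induct_list012) auto

lemma image_snd_edges: "image_mset snd (edges xs) = mset (tl xs)"
  by (induction xs rule: induct_list012) auto

lemma size_edges: "size (edges xs) = length xs - 1"
  by (simp add: edges_def)

lemma in_edgesD: "(x, y) \<in># edges xs \<Longrightarrow> x \<in> set (butlast xs) \<and> y \<in> set (tl xs)"
  by (metis image_fst_edges image_snd_edges image_eqI set_image_mset set_mset_mset fst_conv snd_conv)

lemma in_edges_setD: "(x, y) \<in># edges xs \<Longrightarrow> x \<in> set xs \<and> y \<in> set xs"
  using in_edgesD[of x y xs] in_set_butlastD[of x xs] list.set_sel(2)[of xs y] by fastforce

lemma in_edges_Cons_hd: "ys \<noteq> [] \<Longrightarrow> (x, hd ys) \<in># edges (xs @ x # ys)"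
  by (simp add: edges_append_Cons[of xs x ys] edges_Cons)

lemma edges_split_first:
  assumes "(x, y) \<in># edges l"
  shows "\<exists>p q. l = p @ x # y # q \<and> (x, y) \<notin># edges (p @ [x])"
  using assms
proof (induction l rule: induct_list012)
  case (3 z z' l)
  show ?case
  proof (cases "(x, y) = (z, z')")
    case True
    then have "z # z' # l = [] @ x # y # l" "(x, y) \<notin># edges ([] @ [x])"
      by simp_all
    then show ?thesis by blast
  next
    case False
    then obtain p q where "z' # l = p @ x # y # q" "(x, y) \<notin># edges (p @ [x])"
      using "3.IH"(2) "3.prems" by auto
    moreover have "edges (z # p @ [x]) = add_mset (z, hd (p @ [x])) (edges (p @ [x]))"
      by (simp add: edges_Cons)
    moreover have "hd (p @ [x]) = z'"
      using calculation(1) by (metis hd_append_Cons list.sel(1))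
    ultimately show ?thesis
      using False by (metis append_Cons insert_iff set_mset_add_mset_insert)
  qed
qed simp_all

lemma length_eq_if_edges_eq:
  "s \<noteq> [] \<Longrightarrow> t \<noteq> [] \<Longrightarrow> edges s = edges t \<Longrightarrow> length s = length t"
  by (metis size_edges length_greater_0_conv Suc_diff_1)

lemma last_eq_if_edges_eq:
  assumes "s \<noteq> []" "t \<noteq> []" "hd s = hd t" "edges s = edges t"
  shows "last s = last t"
proof -
  have mset_hd_tl: "mset u = add_mset (hd u) (mset (tl u))"
    and mset_butlast_last: "mset u = add_mset (last u) (mset (butlast u))"
    if "u \<noteq> []" for u :: "'a list"
    using that by (metis list.collapse mset.simps(2),
        metis append_butlast_last_id mset_append mset_single_iff add_mset_add_single)
  have "mset (tl s) = mset (tl t)" "mset (butlast s) = mset (butlast t)"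
    using assms(4) by (metis image_snd_edges, metis image_fst_edges)
  then have "add_mset (last s) (mset (butlast t)) = add_mset (last t) (mset (butlast t))"
    using assms(1-3) mset_hd_tl mset_butlast_last by metis
  then show ?thesis
    by simp
qed

lemma edges_eq_ConsE:
  assumes "s \<noteq> []" "hd s = c" "t \<noteq> []" "edges s = edges (c # t)"
  obtains s' where "s = c # s'" "s' \<noteq> []"
    "add_mset (c, hd s') (edges s') = add_mset (c, hd t) (edges t)"
proof -
  define s' where "s' = tl s"
  have s_eq: "s = c # s'"
    using assms(1,2) unfolding s'_def by (cases s) auto
  moreover have "length s = Suc (length t)"
    using length_eq_if_edges_eq[OF assms(1) _ assms(4)] by simp
  ultimately have "s' \<noteq> []"
    using assms(3) by auto
  moreover have "add_mset (c, hd s') (edges s') = add_mset (c, hd t) (edges t)"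
    using assms(3,4) s_eq \<open>s' \<noteq> []\<close> by (simp add: edges_Cons)
  ultimately show thesis
    using that s_eq by blast
qed

lemma set_subset_if_edges_closed:
  assumes "\<And>x y. (x, y) \<in># edges xs \<Longrightarrow> x \<in> A \<Longrightarrow> y \<in> A" and "hd xs \<in> A"
  shows "set xs \<subseteq> A"
  using assms
proof (induction xs rule: induct_list012)
  case (3 x y zs)
  have "y \<in> A"
    using "3.prems" by force
  moreover have "\<And>a b. (a, b) \<in># edges (y # zs) \<Longrightarrow> a \<in> A \<Longrightarrow> b \<in> A"
    using "3.prems"(1) by auto
  ultimately have "set (y # zs) \<subseteq> A"
    using "3.IH"(2) by simp
  with "3.prems"(2) show ?case by simp
qed simp_all

lemma edges_append_leave:
  assumes "set u \<inter> set v = {}" "(p, q) \<in># edges (u @ v)" "p \<notin> set u"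
  shows "q \<notin> set u"
proof (cases "u = [] \<or> v = []")
  case False
  then show ?thesis
    using assms by (auto simp: edges_append dest: in_edges_setD)
qed (use assms in \<open>auto dest: in_edges_setD\<close>)

lemma edges_append_separated:
  assumes "s1 \<noteq> []" "s2 \<noteq> []" "u \<noteq> []" "v \<noteq> []"
    and "set s1 \<subseteq> A" "set u \<subseteq> A" "set s2 \<inter> A = {}" "set v \<inter> A = {}"
    and "edges (s1 @ s2) = edges (u @ v)"
  shows "edges s1 = edges u" "edges s2 = edges v" "hd s2 = hd v"
proof -
  have inside: "filter_mset (\<lambda>e. snd e \<in> A) (edges w) = edges w"
    and outside: "filter_mset (\<lambda>e. fst e \<notin> A) (edges w) = {#}"
    if "set w \<subseteq> A" for w
    using that by (auto simp: filter_mset_eq_conv dest: in_edges_setD)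
  have inside': "filter_mset (\<lambda>e. snd e \<in> A) (edges w) = {#}"
    and outside': "filter_mset (\<lambda>e. fst e \<notin> A) (edges w) = edges w"
    if "set w \<inter> A = {}" for w
    using that by (auto simp: filter_mset_eq_conv dest: in_edges_setD)
  have "hd s2 \<notin> A" "hd v \<notin> A" "last s1 \<in> A" "last u \<in> A"
    using assms(1-8) by (auto dest: hd_in_set last_in_set)
  then show "edges s1 = edges u" "edges s2 = edges v"
    using arg_cong[OF assms(9), of "filter_mset (\<lambda>e. snd e \<in> A)"]
      arg_cong[OF assms(9), of "filter_mset (\<lambda>e. fst e \<notin> A)"]
    by (simp_all add: edges_append assms(1-4) inside[OF assms(5)] inside[OF assms(6)]
        outside[OF assms(5)] outside[OF assms(6)] inside'[OF assms(7)] inside'[OF assms(8)]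
        outside'[OF assms(7)] outside'[OF assms(8)])
  then show "hd s2 = hd v"
    using assms(9) by (simp add: edges_append assms(1-4))
qed

section \<open>Unique Eulerian trails\<close>

lemma UET_Nil [simp]: "[] \<in> UET"
  by (simp add: UET_def)

lemma UET_I:
  "(\<And>s. t \<noteq> [] \<Longrightarrow> s \<noteq> [] \<Longrightarrow> hd s = hd t \<Longrightarrow> edges s = edges t \<Longrightarrow> s = t) \<Longrightarrow> t \<in> UET"
  by (auto simp: UET_def eulerian_trail_def)

lemma UET_D:
  "t \<in> UET \<Longrightarrow> t \<noteq> [] \<Longrightarrow> s \<noteq> [] \<Longrightarrow> hd s = hd t \<Longrightarrow> edges s = edges t \<Longrightarrow> s = t"
  by (auto simp: UET_def eulerian_trail_def)

lemma not_UET_E: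
  assumes "t \<notin> UET"
  obtains s where "t \<noteq> []" "s \<noteq> []" "hd s = hd t" "edges s = edges t" "s \<noteq> t"
  using assms by (auto simp: UET_def eulerian_trail_def)

lemma UET_singleton [simp]: "[x] \<in> UET"
proof (rule UET_I)
  fix s assume "s \<noteq> []" "hd s = hd [x]" "edges s = edges [x]"
  then show "s = [x]"
    using length_eq_if_edges_eq[of s "[x]"] by (cases s) auto
qed

lemma UET_rev:
  assumes t: "t \<in> UET"
  shows "rev t \<in> UET"
proof (rule UET_I)
  fix s assume "rev t \<noteq> []" and s: "s \<noteq> []" "hd s = hd (rev t)" "edges s = edges (rev t)"
  then have "t \<noteq> []" by simp
  have "hd (rev s) = hd t"
    using last_eq_if_edges_eq[OF s(1) _ s(2,3)] \<open>t \<noteq> []\<close> s(1) by (simp add: hd_rev last_rev)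
  moreover have "edges (rev s) = edges t"
    using s(3) by (simp add: edges_rev multiset.map_comp comp_def)
  ultimately have "rev s = t"
    using UET_D[OF t \<open>t \<noteq> []\<close>] s(1) by simp
  then show "s = rev t" by auto
qed

lemma UET_Cons:
  assumes t: "t \<in> UET" and c: "c \<notin> set (butlast t)"
  shows "c # t \<in> UET"
proof (cases "t = []")
  case False
  show ?thesis
  proof (rule UET_I)
    fix s assume s: "s \<noteq> []" "hd s = hd (c # t)" "edges s = edges (c # t)"
    have "hd s = c"
      using s(2) by simp
    then obtain s' where s': "s = c # s'" "s' \<noteq> []"
      and e: "add_mset (c, hd s') (edges s') = add_mset (c, hd t) (edges t)"
      by (rule edges_eq_ConsE[OF s(1) _ False s(3)])
    have "hd s' = hd t"
    proof (rule ccontr)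
      assume "hd s' \<noteq> hd t"
      then have "(c, hd s') \<in># edges t"
        using insert_noteq_member[OF e[symmetric]] by simp
      then show False
        using c in_edgesD by metis
    qed
    moreover have "edges s' = edges t"
      using e \<open>hd s' = hd t\<close> by simp
    ultimately show "s = c # t"
      using UET_D[OF t False s'(2)] s'(1) by simp
  qed
qed simp

text \<open>A competing trail can cross from the letters of u to those of v only along
  (last u, hd v), and it can never come back.\<close>

lemma UET_append_disjoint:
  assumes u: "u \<in> UET" and v: "v \<in> UET" and disj: "set u \<inter> set v = {}"
  shows "u @ v \<in> UET"
proof (cases "u = [] \<or> v = []")
  case True
  then show ?thesis
    using u v by auto
next
  case False
  then have "u \<noteq> []" "v \<noteq> []" by auto
  note edges_uv = edges_append[OF this]
  show ?thesis
  proof (rule UET_I)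
    fix s assume s: "s \<noteq> []" "hd s = hd (u @ v)" "edges s = edges (u @ v)"
    have "hd v \<in> set s"
      using s(3) edges_uv in_edges_setD[of "last u" "hd v" s] by simp
    moreover have "hd v \<notin> set u"
      using disj \<open>v \<noteq> []\<close> hd_in_set by blast
    ultimately obtain s1 x s2 where sp: "s = s1 @ x # s2" "x \<notin> set u" "\<forall>y\<in>set s1. y \<in> set u"
      using split_list_first_prop[of s "\<lambda>x. x \<notin> set u"] by blast
    have "s1 \<noteq> []"
      using sp s(2) \<open>u \<noteq> []\<close> hd_in_set by (cases s1) auto
    then have "hd s1 = hd u"
      using sp(1) s(2) \<open>u \<noteq> []\<close> by simp
    have "set (x # s2) \<subseteq> - set u"
    proof (rule set_subset_if_edges_closed)
      fix p q assume "(p, q) \<in># edges (x # s2)" "p \<in> - set u"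
      moreover have "edges (x # s2) \<subseteq># edges (u @ v)"
        using s(3) sp(1) edges_append_Cons[of s1 x s2] by (metis mset_subset_eq_add_right)
      ultimately show "q \<in> - set u"
        using edges_append_leave[OF disj] mset_subset_eqD by (metis ComplD ComplI)
    qed (simp add: sp)
    then have "set (x # s2) \<inter> set u = {}" "set s1 \<subseteq> set u" "set v \<inter> set u = {}"
      using sp(3) disj by auto
    then have "edges s1 = edges u" "edges (x # s2) = edges v" "x = hd v"
      using edges_append_separated[of s1 "x # s2" u v "set u"] s(3) sp(1) \<open>s1 \<noteq> []\<close>
        \<open>u \<noteq> []\<close> \<open>v \<noteq> []\<close> by simp_all
    then have "s1 = u" "x # s2 = v"
      using UET_D[OF u \<open>u \<noteq> []\<close>] UET_D[OF v \<open>v \<noteq> []\<close>] \<open>s1 \<noteq> []\<close> \<open>hd s1 = hd u\<close> by auto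
    then show "s = u @ v"
      using sp(1) by simp
  qed
qed

lemma UET_sublist:
  assumes t: "t \<in> UET" and "sublist w t"
  shows "w \<in> UET"
proof (rule UET_I)
  fix w' assume w: "w \<noteq> []" "w' \<noteq> []" "hd w' = hd w" "edges w' = edges w"
  obtain u v where t_eq: "t = u @ w @ v"
    using \<open>sublist w t\<close> unfolding sublist_def by blast
  have "last w' = last w"
    using last_eq_if_edges_eq[OF w(2,1,3,4)] .
  have "edges (u @ w' @ v) = edges (u @ [hd w']) + edges w' + edges (last w' # v)"
    by (rule edges_append_middle[OF w(2)])
  also have "\<dots> = edges t"
    by (simp only: t_eq edges_append_middle[OF w(1)] w(3,4) \<open>last w' = last w\<close>)
  finally have "edges (u @ w' @ v) = edges t" .
  moreover have "hd (u @ w' @ v) = hd t"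
    using w by (simp add: t_eq hd_append)
  moreover have "t \<noteq> []" and "u @ w' @ v \<noteq> []"
    using w t_eq by simp_all
  ultimately have "u @ w' @ v = t"
    by (intro UET_D[OF t])
  then show "w' = w"
    by (simp add: t_eq)
qed

lemma UET_cycle_swap:
  assumes "a # x @ a # y @ [a] \<in> UET"
  shows "x @ a # y = y @ a # x"
proof -
  have "edges (a # y @ a # x @ [a]) = edges (a # x @ a # y @ [a])"
    using edges_append_Cons[of "a # x" a "y @ [a]"] edges_append_Cons[of "a # y" a "x @ [a]"]
    by (simp add: ac_simps)
  then have "a # y @ a # x @ [a] = a # x @ a # y @ [a]"
    by (intro UET_D[OF assms]) simp_all
  then show ?thesis
    by (metis append.assoc append_Cons butlast_snoc list.inject)
qed

lemma UET_path_swap: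
  assumes "a # x @ b # z @ a # y @ [b] \<in> UET"
  shows "x @ b # z @ a # y = y @ b # z @ a # x"
proof -
  have split: "edges (a # p @ b # z @ a # q @ [b])
      = edges (a # p @ [b]) + edges (b # z @ [a]) + edges (a # q @ [b])" for p q
    using edges_append_Cons[of "a # p" b "z @ a # q @ [b]"] edges_append_Cons[of "b # z" a "q @ [b]"]
    by (simp add: ac_simps)
  have "edges (a # y @ b # z @ a # x @ [b]) = edges (a # x @ b # z @ a # y @ [b])"
    unfolding split by (simp add: ac_simps)
  then have "a # y @ b # z @ a # x @ [b] = a # x @ b # z @ a # y @ [b]"
    by (intro UET_D[OF assms]) simp_all
  then show ?thesis
    by (metis append.assoc append_Cons butlast_snoc list.inject)
qed

section \<open>The words of L'' are minimal forbidden\<close>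

lemma min_forbiddenI:
  assumes factor_closed: "\<And>t u. t \<in> L \<Longrightarrow> sublist u t \<Longrightarrow> u \<in> L"
    and "r \<notin> L" "tl r \<in> L" "butlast r \<in> L"
  shows "r \<in> min_forbidden L"
  unfolding min_forbidden_def using assms sublist_proper_cases by blast

lemma min_forbidden_factor:
  assumes "r \<in> min_forbidden L" "r = p @ u @ q" "p \<noteq> [] \<or> q \<noteq> []"
  shows "u \<in> L"
proof -
  have "length u < length r"
    using assms(2,3) by auto
  moreover have "sublist u r"
    using assms(2) by auto
  ultimately show ?thesis
    using assms(1) unfolding min_forbidden_def by auto
qed

lemma UET_path_tail:
  assumes "a \<noteq> b" and "x \<in> UET" "y \<in> UET" "z \<in> UET"
    and "a \<notin> set x" "a \<notin> set y" "a \<notin> set z" "b \<notin> set x" "b \<notin> set y" "b \<notin> set z"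
    and "set x \<inter> set y = {}" "set x \<inter> set z = {}" "set y \<inter> set z = {}"
  shows "x @ b # z @ a # y @ [b] \<in> UET"
proof -
  have "y @ [b] \<in> UET"
    by (rule UET_append_disjoint) (use assms in auto)
  then have "[a] @ y @ [b] \<in> UET"
    by (intro UET_append_disjoint) (use assms in auto)
  then have "z @ [a] @ y @ [b] \<in> UET"
    by (intro UET_append_disjoint) (use assms in auto)
  then have tail: "b # z @ a # y @ [b] \<in> UET"
    by (intro UET_Cons) (use assms in \<open>auto simp: butlast_append\<close>)
  show ?thesis
    using UET_append_disjoint[OF \<open>x \<in> UET\<close> tail] assms by auto
qed

lemma UET_cycle_tail:
  assumes "x \<in> UET" "y \<in> UET" "a \<notin> set x" "a \<notin> set y" "set x \<inter> set y = {}"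
  shows "x @ a # y @ [a] \<in> UET"
proof -
  have "y @ [a] \<in> UET"
    by (rule UET_append_disjoint) (use assms in auto)
  then have tail: "a # y @ [a] \<in> UET"
    by (intro UET_Cons) (use assms in auto)
  show ?thesis
    using UET_append_disjoint[OF \<open>x \<in> UET\<close> tail] assms by auto
qed

lemma path_word_min_forbidden:
  assumes "a \<noteq> b" and "x \<noteq> [] \<or> y \<noteq> []" and "x \<in> UET" "y \<in> UET" "z \<in> UET"
    and "a \<notin> set x" "a \<notin> set y" "a \<notin> set z" "b \<notin> set x" "b \<notin> set y" "b \<notin> set z"
    and "set x \<inter> set y = {}" "set x \<inter> set z = {}" "set y \<inter> set z = {}"
  shows "a # x @ b # z @ a # y @ [b] \<in> min_forbidden UET"
proof (rule min_forbiddenI)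
  show "\<And>t u. t \<in> UET \<Longrightarrow> sublist u t \<Longrightarrow> u \<in> UET"
    by (rule UET_sublist)
  show "a # x @ b # z @ a # y @ [b] \<notin> UET"
  proof
    assume "a # x @ b # z @ a # y @ [b] \<in> UET"
    then have "x @ b # z @ a # y = y @ b # z @ a # x"
      by (rule UET_path_swap)
    then have "x = y"
      using append_Cons_eq_append_Cons_first assms(9,10) by metis
    then show False
      using assms(2,12) by auto
  qed
  show "tl (a # x @ b # z @ a # y @ [b]) \<in> UET"
    using UET_path_tail[OF assms(1,3-)] by simp
  have "rev x \<in> UET" "rev y \<in> UET" "rev z \<in> UET"
    using UET_rev assms(3-5) by blast+
  then have "rev y @ a # rev z @ b # rev x @ [a] \<in> UET"
    by (intro UET_path_tail) (use assms in auto)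
  then have "rev (rev y @ a # rev z @ b # rev x @ [a]) \<in> UET"
    by (rule UET_rev)
  then show "butlast (a # x @ b # z @ a # y @ [b]) \<in> UET"
    by (simp add: butlast_append)
qed

lemma cycle_word_min_forbidden:
  assumes "x \<noteq> [] \<or> y \<noteq> []" and "x \<in> UET" "y \<in> UET"
    and "a \<notin> set x" "a \<notin> set y" "set x \<inter> set y = {}"
  shows "a # x @ a # y @ [a] \<in> min_forbidden UET"
proof (rule min_forbiddenI)
  show "\<And>t u. t \<in> UET \<Longrightarrow> sublist u t \<Longrightarrow> u \<in> UET"
    by (rule UET_sublist)
  show "a # x @ a # y @ [a] \<notin> UET"
  proof
    assume "a # x @ a # y @ [a] \<in> UET"
    then have "x @ a # y = y @ a # x"
      by (rule UET_cycle_swap)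
    then have "x = y"
      using append_Cons_eq_append_Cons_first assms(4,5) by metis
    then show False
      using assms(1,6) by auto
  qed
  show "tl (a # x @ a # y @ [a]) \<in> UET"
    using UET_cycle_tail[OF assms(2-)] by simp
  have "rev x \<in> UET" "rev y \<in> UET"
    using UET_rev assms(2,3) by blast+
  then have "rev y @ a # rev x @ [a] \<in> UET"
    by (intro UET_cycle_tail) (use assms in auto)
  then have "rev (rev y @ a # rev x @ [a]) \<in> UET"
    by (rule UET_rev)
  then show "butlast (a # x @ a # y @ [a]) \<in> UET"
    by (simp add: butlast_append)
qed

section \<open>Minimal forbidden words lie in L''\<close>

lemma min_forbidden_UET_split:
  assumes mf: "r \<in> min_forbidden UET"
  obtains a C D where "r = a # C @ a # D" "D \<noteq> []" "hd (C @ [a]) \<noteq> hd D"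
    "(a, hd D) \<notin># edges (C @ [a])"
proof -
  have "r \<notin> UET"
    using mf by (simp add: min_forbidden_def)
  then obtain s where s: "r \<noteq> []" "s \<noteq> []" "hd s = hd r" "edges s = edges r" "s \<noteq> r"
    by (rule not_UET_E)
  then obtain a r' where r: "r = a # r'"
    by (cases r) auto
  with \<open>r \<notin> UET\<close> have "r' \<noteq> []"
    by auto
  have "r' \<in> UET"
    using min_forbidden_factor[OF mf, of "[a]" r' "[]"] r by simp
  have "hd s = a" "edges s = edges (a # r')"
    using s(3,4) r by simp_all
  then obtain s' where s': "s = a # s'" "s' \<noteq> []"
    and e: "add_mset (a, hd s') (edges s') = add_mset (a, hd r') (edges r')"
    using edges_eq_ConsE[OF s(2) _ \<open>r' \<noteq> []\<close>] by blast
  have "hd s' \<noteq> hd r'"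
  proof
    assume "hd s' = hd r'"
    then have "s' = r'"
      using e UET_D[OF \<open>r' \<in> UET\<close> \<open>r' \<noteq> []\<close> s'(2)] by simp
    then show False
      using s(5) r s'(1) by simp
  qed
  then have "(a, hd s') \<in># edges r'"
    using insert_noteq_member[OF e[symmetric]] by simp
  then obtain C Q where "r' = C @ a # hd s' # Q" "(a, hd s') \<notin># edges (C @ [a])"
    by (meson edges_split_first)
  moreover have "hd (C @ [a]) = hd r'"
    using calculation(1) by (simp add: hd_append)
  ultimately show thesis
    using that[of a C "hd s' # Q"] r \<open>hd s' \<noteq> hd r'\<close> by simp
qed

text \<open>Here (a, hd D) is the edge along which a competing trail leaves the initial a of r,
  and C is cut off at the first occurrence of this edge after the initial a.\<close>

context
  fixes r C D :: "'a list" and a :: 'a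
  assumes mf: "r \<in> min_forbidden UET"
    and r_eq: "r = a # C @ a # D"
    and D_ne: "D \<noteq> []"
    and hd_ne: "hd (C @ [a]) \<noteq> hd D"
    and first_edge: "(a, hd D) \<notin># edges (C @ [a])"
begin

lemma proper_factor_UET: "r = p @ u @ q \<Longrightarrow> p \<noteq> [] \<or> q \<noteq> [] \<Longrightarrow> u \<in> UET"
  by (rule min_forbidden_factor[OF mf])

lemma first_edge_after: "C = C1 @ a # C2 \<Longrightarrow> hd (C2 @ [a]) \<noteq> hd D"
  using first_edge in_edges_Cons_hd[of "C2 @ [a]" a C1] by auto

lemma cycle_case_shape:
  assumes "a \<in> set D"
  obtains D' where "D = D' @ [a]" "a \<notin> set D'"
proof -
  obtain D1 D2 where D: "D = D1 @ a # D2" "a \<notin> set D1"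
    using split_list_first[OF assms] by blast
  have "D2 = []"
  proof (rule ccontr)
    assume "D2 \<noteq> []"
    then have "a # C @ a # D1 @ [a] \<in> UET"
      using proper_factor_UET[of "[]" _ D2] r_eq D by simp
    then have "C @ a # D1 = D1 @ a # C"
      by (rule UET_cycle_swap)
    then have "hd (C @ [a]) = hd (D1 @ [a])"
      by (metis hd_append_Cons)
    then show False
      using hd_ne D(1) hd_append_Cons by metis
  qed
  with D show thesis
    using that by simp
qed

lemma cycle_case_a_notin_C:
  assumes "D = D' @ [a]"
  shows "a \<notin> set C"
proof
  assume "a \<in> set C"
  then obtain C1 C2 where C: "C = C1 @ a # C2"
    by (meson split_list)
  have "a # C2 @ a # D' @ [a] \<in> UET"
    using proper_factor_UET[of "a # C1" _ "[]"] r_eq C assms by simp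
  then have "C2 @ a # D' = D' @ a # C2"
    by (rule UET_cycle_swap)
  then have "hd (C2 @ [a]) = hd D"
    using assms by (metis hd_append_Cons)
  then show False
    using first_edge_after[OF C] by simp
qed

lemma cycle_case_disjoint:
  assumes "D = D' @ [a]" "a \<notin> set D'"
  shows "set C \<inter> set D' = {}"
proof (rule ccontr)
  assume "set C \<inter> set D' \<noteq> {}"
  then obtain e where e: "e \<in> set C" "e \<in> set D'"
    by blast
  obtain X1 X2 where X: "C = X1 @ e # X2" "e \<notin> set X1"
    using split_list_first[OF e(1)] by blast
  obtain Y1 Y2 where Y: "D' = Y1 @ e # Y2" "e \<notin> set Y1"
    using split_list_first[OF e(2)] by blast
  have "a \<notin> set C"
    by (rule cycle_case_a_notin_C[OF assms(1)])
  have "e # X2 @ a # Y1 @ e # Y2 @ [a] \<in> UET"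
    using proper_factor_UET[of "a # X1" _ "[]"] r_eq assms(1) X Y by simp
  then have "X2 @ a # Y1 @ e # Y2 = Y2 @ a # Y1 @ e # X2"
    by (rule UET_path_swap)
  moreover have "a \<notin> set X2" "a \<notin> set Y2"
    using \<open>a \<notin> set C\<close> assms(2) X(1) Y(1) by simp_all
  ultimately have "X2 = Y2"
    using append_Cons_eq_append_Cons_first by metis
  have "a # X1 @ e # X2 @ a # Y1 @ [e] \<in> UET"
    using proper_factor_UET[of "[]" _ "Y2 @ [a]"] r_eq assms(1) X Y by simp
  then have "X1 @ e # X2 @ a # Y1 = Y1 @ e # X2 @ a # X1"
    by (rule UET_path_swap)
  then have "X1 = Y1"
    using append_Cons_eq_append_Cons_first X(2) Y(2) by metis
  with \<open>X2 = Y2\<close> have "C = D'"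
    using X Y by simp
  then show False
    using hd_ne assms(1) by simp
qed

lemma cycle_case:
  assumes "a \<in> set D"
  shows "r \<in> Lpp"
proof -
  obtain D' where D: "D = D' @ [a]" "a \<notin> set D'"
    using cycle_case_shape[OF assms] by blast
  have r_cycle: "r = [a] @ C @ [a] @ D' @ [a]"
    using r_eq D by simp
  have "C \<noteq> [] \<or> D' \<noteq> []"
    using hd_ne D by auto
  moreover have "C \<in> UET" "D' \<in> UET"
    using proper_factor_UET[of "[a]" C "a # D' @ [a]"] proper_factor_UET[of "a # C @ [a]" D' "[a]"]
      r_eq D by simp_all
  ultimately show ?thesis
    unfolding Lpp_def
    using r_cycle D(2) cycle_case_a_notin_C[OF D(1)] cycle_case_disjoint[OF D]
    by (intro CollectI disjI2 exI[of _ a] exI[of _ C] exI[of _ D']) simp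
qed

lemma path_case_C_meets_D:
  assumes "a \<notin> set D"
  shows "set C \<inter> set D \<noteq> {}"
proof
  assume "set C \<inter> set D = {}"
  then have "set (a # C @ [a]) \<inter> set D = {}"
    using assms by auto
  moreover have "a # C @ [a] \<in> UET"
    using proper_factor_UET[of "[]" _ D] r_eq D_ne by simp
  moreover have "D \<in> UET"
    using proper_factor_UET[of "a # C @ [a]" D "[]"] r_eq by simp
  ultimately have "(a # C @ [a]) @ D \<in> UET"
    using UET_append_disjoint by blast
  then show False
    using mf r_eq by (simp add: min_forbidden_def)
qed

lemma path_case_letter_of_C_ends_D:
  assumes w: "w \<in> set C" and D: "D = D1 @ w # D2"
  shows "D2 = []"
proof (rule ccontr)
  assume "D2 \<noteq> []"
  obtain C1 C2 where C: "C = C1 @ w # C2"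
    using split_list[OF w] by blast
  have "a # C1 @ w # C2 @ a # D1 @ [w] \<in> UET"
    using proper_factor_UET[of "[]" _ D2] r_eq C D \<open>D2 \<noteq> []\<close> by simp
  then have "C1 @ w # C2 @ a # D1 = D1 @ w # C2 @ a # C1"
    by (rule UET_path_swap)
  then have "hd (C1 @ [w]) = hd (D1 @ [w])"
    by (metis hd_append_Cons)
  moreover have "hd (C @ [a]) = hd (C1 @ [w])" "hd D = hd (D1 @ [w])"
    using C D by (simp_all add: hd_append)
  ultimately show False
    using hd_ne by simp
qed

lemma path_case_shape:
  assumes "a \<notin> set D"
  obtains Y b where "D = Y @ [b]" "b \<in> set C" "set C \<inter> set Y = {}"
proof -
  obtain b where b: "b \<in> set C" "b \<in> set D"
    using path_case_C_meets_D[OF assms] by blast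
  then obtain Y D2 where "D = Y @ b # D2"
    by (meson split_list)
  then have D: "D = Y @ [b]"
    using path_case_letter_of_C_ends_D[OF b(1)] by simp
  moreover have "set C \<inter> set Y = {}"
  proof (rule ccontr)
    assume "set C \<inter> set Y \<noteq> {}"
    then obtain e where "e \<in> set C" "e \<in> set Y"
      by blast
    moreover obtain Y1 Y2 where "Y = Y1 @ e # Y2"
      using split_list[OF \<open>e \<in> set Y\<close>] by blast
    ultimately show False
      using path_case_letter_of_C_ends_D[of e Y1 "Y2 @ [b]"] D by simp
  qed
  ultimately show thesis
    using that b(1) by blast
qed

context
  fixes Y :: "'a list" and b :: 'a
  assumes D_eq: "D = Y @ [b]"
    and a_notin_D: "a \<notin> set D"
    and b_in_C: "b \<in> set C"
    and C_Y_disj: "set C \<inter> set Y = {}"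
begin

lemma path_case_a_neq_b: "a \<noteq> b"
  using a_notin_D D_eq by auto

lemma path_case_b_notin_Y: "b \<notin> set Y"
  using b_in_C C_Y_disj by blast

lemma path_case_b_notin_after_a:
  assumes C: "C = C1 @ a # C2"
  shows "b \<notin> set C2"
proof
  assume "b \<in> set C2"
  then obtain Z1 Z2 where Z: "C2 = Z1 @ b # Z2"
    by (meson split_list)
  have "a # Z1 @ b # Z2 @ a # Y @ [b] \<in> UET"
    using proper_factor_UET[of "a # C1" _ "[]"] r_eq C Z D_eq by simp
  then have "Z1 @ b # Z2 @ a # Y = Y @ b # Z2 @ a # Z1"
    by (rule UET_path_swap)
  then have "hd (Z1 @ [b]) = hd D"
    using D_eq by (metis hd_append_Cons)
  moreover have "hd (C2 @ [a]) = hd (Z1 @ [b])"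
    using Z by (simp add: hd_append)
  ultimately show False
    using first_edge_after[OF C] by simp
qed

lemma path_case_a_notin_C: "a \<notin> set C"
proof
  assume "a \<in> set C"
  then obtain C1 C2 where C: "C = C1 @ a # C2" "a \<notin> set C1"
    using split_list_first by metis
  have "b \<in> set C1"
    using b_in_C C path_case_b_notin_after_a[OF C(1)] path_case_a_neq_b by auto
  have "a \<in> set (C2 @ [a])"
    by simp
  then obtain V W where V: "C2 @ [a] = V @ a # W" "a \<notin> set V"
    using split_list_first by metis
  have "set V \<subseteq> insert a (set C2)"
    using arg_cong[OF V(1), of set] by auto
  with V(2) have "set V \<subseteq> set C2"
    by auto
  have "a # C1 @ a # V @ [a] \<in> UET"
    using proper_factor_UET[of "[]" _ "W @ D"] r_eq C(1) V(1) D_ne by simp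
  then have "C1 @ a # V = V @ a # C1"
    by (rule UET_cycle_swap)
  then have "C1 = V"
    using append_Cons_eq_append_Cons_first C(2) V(2) by metis
  then show False
    using \<open>b \<in> set C1\<close> \<open>set V \<subseteq> set C2\<close> path_case_b_notin_after_a[OF C(1)] by auto
qed

lemma path_case_b_notin_X:
  assumes C: "C = X @ b # Z" and "b \<notin> set Z"
  shows "b \<notin> set X"
proof
  assume "b \<in> set X"
  then obtain X' R where X: "X = X' @ b # R" "b \<notin> set R"
    using split_list_last by metis
  have "b # R @ b # (Z @ a # Y) @ [b] \<in> UET"
    using proper_factor_UET[of "a # X'" _ "[]"] r_eq C X(1) D_eq by simp
  then have "R @ b # Z @ a # Y = (Z @ a # Y) @ b # R"
    by (rule UET_cycle_swap)
  moreover have "b \<notin> set (Z @ a # Y)"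
    using assms(2) path_case_a_neq_b path_case_b_notin_Y by simp
  ultimately have "R = Z @ a # Y"
    using append_Cons_eq_append_Cons_first X(2) by metis
  then show False
    using path_case_a_notin_C C X(1) by simp
qed

lemma path_case_disjoint:
  assumes C: "C = X @ b # Z" and "b \<notin> set Z"
  shows "set X \<inter> set Z = {}"
proof (rule ccontr)
  assume "set X \<inter> set Z \<noteq> {}"
  then obtain w where w: "w \<in> set X" "w \<in> set Z"
    by blast
  obtain X1 X2 where X: "X = X1 @ w # X2"
    using split_list[OF w(1)] by blast
  obtain Z1 Z2 where Z: "Z = Z1 @ w # Z2"
    using split_list[OF w(2)] by blast
  have "w # X2 @ b # Z1 @ w # (Z2 @ a # Y) @ [b] \<in> UET"
    using proper_factor_UET[of "a # X1" _ "[]"] r_eq C X Z D_eq by simp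
  then have "X2 @ b # Z1 @ w # Z2 @ a # Y = (Z2 @ a # Y) @ b # Z1 @ w # X2"
    by (rule UET_path_swap)
  moreover have "b \<notin> set X2" "b \<notin> set (Z2 @ a # Y)"
    using path_case_b_notin_X[OF assms] assms(2) X Z path_case_a_neq_b path_case_b_notin_Y
    by simp_all
  ultimately have "X2 = Z2 @ a # Y"
    using append_Cons_eq_append_Cons_first by metis
  then show False
    using path_case_a_notin_C C X by simp
qed

lemma path_case_Lpp: "r \<in> Lpp"
proof -
  obtain X Z where C: "C = X @ b # Z" "b \<notin> set Z"
    using split_list_last[OF b_in_C] by blast
  have r_path: "r = [a] @ X @ [b] @ Z @ [a] @ Y @ [b]"
    using r_eq C D_eq by simp
  have "X \<noteq> [] \<or> Y \<noteq> []"
    using hd_ne C D_eq by auto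
  moreover have "X \<in> UET" "Z \<in> UET" "Y \<in> UET"
    using proper_factor_UET[of "[a]" X "b # Z @ a # Y @ [b]"]
      proper_factor_UET[of "a # X @ [b]" Z "a # Y @ [b]"]
      proper_factor_UET[of "a # X @ b # Z @ [a]" Y "[b]"] r_path by simp_all
  moreover have "a \<notin> set X" "a \<notin> set Z" "a \<notin> set Y"
    using path_case_a_notin_C C a_notin_D D_eq by simp_all
  moreover have "b \<notin> set X" "b \<notin> set Y"
    using path_case_b_notin_X[OF C] path_case_b_notin_Y .
  moreover have "set X \<inter> set Y = {}" "set Z \<inter> set Y = {}"
    using C_Y_disj C by auto
  ultimately show ?thesis
    unfolding Lpp_def
    using r_path path_case_a_neq_b C(2) path_case_disjoint[OF C]
    by (intro CollectI disjI1 exI[of _ a] exI[of _ b] exI[of _ X] exI[of _ Y] exI[of _ Z])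
      (simp add: Int_commute)
qed

end

lemma path_case:
  assumes "a \<notin> set D"
  shows "r \<in> Lpp"
  using path_case_shape[OF assms] path_case_Lpp assms by metis

end

theorem theorem1:
  shows "(Lpp :: ('a::finite) list set) = min_forbidden UET"
proof (intro equalityI subsetI)
  fix r :: "'a list"
  assume "r \<in> Lpp"
  then show "r \<in> min_forbidden UET"
    unfolding Lpp_def
    by (elim CollectE disjE exE conjE) (simp_all add: path_word_min_forbidden cycle_word_min_forbidden)
next
  fix r :: "'a list"
  assume mf: "r \<in> min_forbidden UET"
  then obtain a C D where split: "r = a # C @ a # D" "D \<noteq> []" "hd (C @ [a]) \<noteq> hd D"
    "(a, hd D) \<notin># edges (C @ [a])"
    by (rule min_forbidden_UET_split)
  show "r \<in> Lpp"
    using cycle_case[OF mf split] path_case[OF mf split] by blast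
qed

end
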